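(* Let $S$ be a right non-degenerate semigroup of skew type. Then for every $x,y\in S$ there exist $t,w\in S$ such that $|w|=|y|$ and $xw=yt$.
   Context: A semigroup of skew type is a monoid $S$ with a monoid presentation $S=\langle x_1,\ldots,x_n \mid x_ix_j=x_kx_l\rangle$ consisting of $\binom{n}{2}$ relations, each of the form $x_ix_j=x_kx_l$ with $i\neq j$, $k\neq l$, such that every word $x_px_q$ with $p\neq q$ appears (as one side) in exactly one of the relations; $X=\{x_1,\ldots,x_n\}$. Since relations are homogeneous, the length $|s|$ of $s\in S$ as a word in the generators is well defined. For $a,b\in X$, the partner of $ab$ is the other side of the unique defining relation containing $ab$ if $a\neq b$, and $ab$ itself if $a=b$. $S$ is right non-degenerate if for every $x\in X$ the map $X\to X$ sending $y$ to the first letter of the partner of $xy$ is surjective. *)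

theory Defs
  imports Main
begin

text \<open>Generators X are the elements of a finite type 'a. A defining relation
  x_i x_j = x_k x_l is encoded as the pair ((i,j),(k,l)); a word of length two
  x_p x_q is the pair (p,q). Elements of S are represented by words
  (lists over 'a) modulo the monoid congruence generated by the relations.\<close>

definition skew_type :: "(('a::finite \<times> 'a) \<times> ('a \<times> 'a)) set \<Rightarrow> bool" where
  "skew_type R \<longleftrightarrow>
     card R = card (UNIV :: 'a set) choose 2 \<and>
     (\<forall>((i,j),(k,l)) \<in> R. i \<noteq> j \<and> k \<noteq> l) \<and>
     (\<forall>p q. p \<noteq> q \<longrightarrow> (\<exists>!rel. rel \<in> R \<and> (fst rel = (p,q) \<or> snd rel = (p,q))))"

inductive pres_step :: "(('a \<times> 'a) \<times> ('a \<times> 'a)) set \<Rightarrow> 'a list \<Rightarrow> 'a list \<Rightarrow> bool"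
  for R where
  fwd: "((i,j),(k,l)) \<in> R \<Longrightarrow> pres_step R (u @ [i,j] @ v) (u @ [k,l] @ v)"
| bwd: "((i,j),(k,l)) \<in> R \<Longrightarrow> pres_step R (u @ [k,l] @ v) (u @ [i,j] @ v)"

definition pres_eq :: "(('a \<times> 'a) \<times> ('a \<times> 'a)) set \<Rightarrow> 'a list \<Rightarrow> 'a list \<Rightarrow> bool" where
  "pres_eq R = (pres_step R)\<^sup>*\<^sup>*"

definition partner :: "(('a \<times> 'a) \<times> ('a \<times> 'a)) set \<Rightarrow> 'a \<Rightarrow> 'a \<Rightarrow> 'a \<times> 'a" where
  "partner R a b =
     (if a = b then (a, b)
      else (let rel = (THE rel. rel \<in> R \<and> (fst rel = (a,b) \<or> snd rel = (a,b)))
            in if fst rel = (a,b) then snd rel else fst rel))"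

definition right_nondegenerate :: "(('a \<times> 'a) \<times> ('a \<times> 'a)) set \<Rightarrow> bool" where
  "right_nondegenerate R \<longleftrightarrow> (\<forall>x. surj (\<lambda>y. fst (partner R x y)))"

end

theory Submission
  imports Defs
begin

text \<open>Right non-degeneracy says that for all generators \<open>a, b\<close> some \<open>c\<close> makes the partner
  of \<open>ac\<close> begin with \<open>b\<close>, so \<open>ac = bd\<close> in \<open>S\<close>. Completing such squares letter by letter, as in
  a grid, gives \<open>aw = yt\<close> with \<open>|w| = |y|\<close> for a generator \<open>a\<close>, and stacking these rows for
  the letters of \<open>x\<close> gives \<open>xw = yt\<close>.\<close>

lemma pres_eq_refl: "pres_eq R u u"
  by (simp add: pres_eq_def)

lemma pres_eq_trans [trans]: "pres_eq R u v \<Longrightarrow> pres_eq R v w \<Longrightarrow> pres_eq R u w"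
  unfolding pres_eq_def by (rule rtranclp_trans)

lemma pres_step_append_context:
  "pres_step R u v \<Longrightarrow> pres_step R (p @ u @ q) (p @ v @ q)"
proof (induction rule: pres_step.induct)
  case (fwd i j k l u v)
  from pres_step.fwd[OF fwd, of "p @ u" "v @ q"] show ?case by simp
next
  case (bwd i j k l u v)
  from pres_step.bwd[OF bwd, of "p @ u" "v @ q"] show ?case by simp
qed

lemma pres_eq_append_context:
  "pres_eq R u v \<Longrightarrow> pres_eq R (p @ u @ q) (p @ v @ q)"
  unfolding pres_eq_def
proof (induction rule: rtranclp_induct)
  case base
  show ?case by simp
next
  case (step v v')
  then show ?case
    using pres_step_append_context[OF step(2)] by (meson rtranclp.rtrancl_into_rtrancl)
qed

lemma pres_eq_append_right: "pres_eq R u v \<Longrightarrow> pres_eq R (u @ q) (v @ q)"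
  using pres_eq_append_context[of R u v "[]" q] by simp

lemma pres_eq_append_left: "pres_eq R u v \<Longrightarrow> pres_eq R (p @ u) (p @ v)"
  using pres_eq_append_context[of R u v p "[]"] by simp

lemma pres_eq_partner:
  assumes "skew_type R"
  shows "pres_eq R [a, c] [fst (partner R a c), snd (partner R a c)]"
proof (cases "a = c")
  case True
  then show ?thesis by (simp add: partner_def pres_eq_refl)
next
  case False
  define rel where "rel = (THE rel. rel \<in> R \<and> (fst rel = (a, c) \<or> snd rel = (a, c)))"
  from assms False have "\<exists>!rel. rel \<in> R \<and> (fst rel = (a, c) \<or> snd rel = (a, c))"
    unfolding skew_type_def by blast
  then have "rel \<in> R \<and> (fst rel = (a, c) \<or> snd rel = (a, c))"
    unfolding rel_def by (rule theI')
  then have rel: "rel \<in> R" "fst rel = (a, c) \<or> snd rel = (a, c)"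
    by simp_all
  have partner: "partner R a c = (if fst rel = (a, c) then snd rel else fst rel)"
    using False by (simp add: partner_def rel_def Let_def)
  obtain i j k l where ijkl: "rel = ((i, j), (k, l))" by (metis prod.collapse)
  have "pres_step R [i, j] [k, l]" "pres_step R [k, l] [i, j]"
    using pres_step.fwd[of i j k l R "[]" "[]"] pres_step.bwd[of i j k l R "[]" "[]"] rel ijkl
    by simp_all
  then show ?thesis
    using rel(2) partner ijkl unfolding pres_eq_def by auto
qed

lemma right_nondegenerate_common_right_multiple_letters:
  assumes "skew_type R" "right_nondegenerate R"
  shows "\<exists>c d. pres_eq R [a, c] [b, d]"
proof -
  from assms(2) obtain c where "b = fst (partner R a c)"
    unfolding right_nondegenerate_def by (metis surjD)
  then show ?thesis using pres_eq_partner[OF assms(1), of a c] by metis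
qed

lemma common_right_multiple_letter_word:
  assumes letters: "\<And>a b. \<exists>c d. pres_eq R [a, c] [b, d]"
  shows "\<exists>t w. length w = length y \<and> pres_eq R (a # w) (y @ t)"
proof (induction y arbitrary: a)
  case Nil
  show ?case using pres_eq_refl by fastforce
next
  case (Cons b y)
  obtain c d where cd: "pres_eq R [a, c] [b, d]" using letters by blast
  obtain t w where tw: "length w = length y" "pres_eq R (d # w) (y @ t)"
    using Cons.IH by blast
  have "pres_eq R (a # c # w) (b # d # w)"
    using pres_eq_append_right[OF cd, of w] by simp
  also have "pres_eq R (b # d # w) (b # y @ t)"
    using pres_eq_append_left[OF tw(2), of "[b]"] by simp
  finally have "pres_eq R (a # c # w) ((b # y) @ t)"
    by simp
  then show ?case using tw(1) by (metis length_Cons)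
qed

lemma common_right_multiple_words:
  assumes letters: "\<And>a b. \<exists>c d. pres_eq R [a, c] [b, d]"
  shows "\<exists>t w. length w = length y \<and> pres_eq R (x @ w) (y @ t)"
proof (induction x arbitrary: y)
  case Nil
  have "pres_eq R ([] @ y) (y @ [])"
    by (simp add: pres_eq_refl)
  then show ?case by blast
next
  case (Cons a x)
  obtain t1 w1 where row: "length w1 = length y" "pres_eq R (a # w1) (y @ t1)"
    using common_right_multiple_letter_word[OF letters] by blast
  obtain t2 w2 where rest: "length w2 = length w1" "pres_eq R (x @ w2) (w1 @ t2)"
    using Cons.IH by blast
  have "pres_eq R (a # x @ w2) (a # w1 @ t2)"
    using pres_eq_append_left[OF rest(2), of "[a]"] by simp
  also have "pres_eq R (a # w1 @ t2) (y @ t1 @ t2)"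
    using pres_eq_append_right[OF row(2), of t2] by simp
  finally have "pres_eq R ((a # x) @ w2) (y @ t1 @ t2)"
    by simp
  then show ?case using row(1) rest(1) by metis
qed

theorem lemma4p2:
  fixes R :: "(('a::finite \<times> 'a) \<times> ('a \<times> 'a)) set"
  assumes "skew_type R" and "right_nondegenerate R"
  shows "\<forall>x y :: 'a list. \<exists>t w :: 'a list.
           length w = length y \<and> pres_eq R (x @ w) (y @ t)"
  using common_right_multiple_words
    right_nondegenerate_common_right_multiple_letters[OF assms] by blast

end
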